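(* Let $\mathcal G$ be a strongly connected directed graph with no self loops, with $n$ vertices and $m$ edges. Let $B=S-D\in\mathbb{R}^{n\times m}$ be its incidence matrix, let $Q=DB^\mathsf{T}$, and let $W=\mathbf{1}z^\mathsf{T}$ and $Q^\ddagger$ be as defined in the context. Let $\omega^{\mathrm u}\in\mathbb{R}^n$ be constant and let $k>0$. Suppose $\tilde\theta:[0,\infty)\to\mathbb{R}^n$ satisfies \[ \dot{\tilde\theta}(t)=\omega^{\mathrm u}+c(t),\qquad \tilde\beta(t)=B^\mathsf{T}\tilde\theta(t),\qquad y(t)=D\tilde\beta(t), \] with the controller $c(t)=k\,y(t)$. Then \[ \tilde\theta(t)=\Big(Wt+k^{-1}Q^\ddagger\big(e^{kQt}-I\big)\Big)\omega^{\mathrm u}+e^{kQt}\tilde\theta(0). \] Moreover, as $t\to\infty$, the frequency $\omega(t)=\omega^{\mathrm u}+c(t)$ converges to $\omega^{\mathrm{ss}}=W\omega^{\mathrm u}$, and $\tilde\beta(t)$ converges to $\beta^{\mathrm{ss}}=-k^{-1}B^\mathsf{T}Q^\ddagger\omega^{\mathrm u}$.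
   Context: The matrices $S,D\in\mathbb{R}^{n\times m}$ are defined by $S_{ie}=1$ if node $i$ is the source of edge $e$ and $0$ otherwise, and $D_{ie}=1$ if node $i$ is the destination of edge $e$ and $0$ otherwise. The vector $\mathbf{1}$ is the all-ones vector. The matrix $Q=DB^\mathsf{T}$ is an irreducible rate matrix (nonnegative off-diagonal entries, zero row sums). Let $z>0$ be its left eigenvector for eigenvalue $0$ ($z^\mathsf{T}Q=0$), normalized so that $\mathbf{1}^\mathsf{T}z=1$, and set $W=\mathbf{1}z^\mathsf{T}$. Write $Q=T\begin{bmatrix}0&0\\0&\Lambda\end{bmatrix}T^{-1}$, where $T$ is invertible with first column $\mathbf{1}$, the first row of $T^{-1}$ is $z^\mathsf{T}$, and $\Lambda\in\mathbb{R}^{(n-1)\times(n-1)}$ is invertible. Define $Q^\ddagger=T\begin{bmatrix}0&0\\0&\Lambda^{-1}\end{bmatrix}T^{-1}$. *)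

theory Defs
  imports "HOL-Analysis.Analysis"
begin

definition edge_rel :: "('m \<Rightarrow> 'n) \<Rightarrow> ('m \<Rightarrow> 'n) \<Rightarrow> ('n \<times> 'n) set" where
  "edge_rel src dst = {(src e, dst e) | e. True}"

definition strongly_connected :: "('m \<Rightarrow> 'n) \<Rightarrow> ('m \<Rightarrow> 'n) \<Rightarrow> bool" where
  "strongly_connected src dst \<longleftrightarrow> (\<forall>i j. (i, j) \<in> (edge_rel src dst)\<^sup>*)"

definition src_mat :: "('m::finite \<Rightarrow> 'n::finite) \<Rightarrow> real^'m^'n" where
  "src_mat src = (\<chi> i e. if src e = i then 1 else 0)"

definition dst_mat :: "('m::finite \<Rightarrow> 'n::finite) \<Rightarrow> real^'m^'n" where
  "dst_mat dst = (\<chi> i e. if dst e = i then 1 else 0)"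

definition incidence_mat :: "('m::finite \<Rightarrow> 'n::finite) \<Rightarrow> ('m \<Rightarrow> 'n) \<Rightarrow> real^'m^'n" where
  "incidence_mat src dst = src_mat src - dst_mat dst"

primrec mat_pow :: "real^'n^'n \<Rightarrow> nat \<Rightarrow> real^'n^'n" where
  "mat_pow A 0 = mat 1"
| "mat_pow A (Suc k) = A ** mat_pow A k"

definition mat_exp :: "real^'n^'n \<Rightarrow> real^'n^'n" where
  "mat_exp A = (\<Sum>k. (1 / fact k) *\<^sub>R mat_pow A k)"

definition ones :: "real^'n" where "ones = (\<chi> i. 1)"

definition ones_outer :: "real^'n \<Rightarrow> real^'n^'n" where
  "ones_outer z = (\<chi> i j. z $ j)"

text \<open>Block structure diag(0, M) with respect to a distinguished ("first") index i0:
  row i0 and column i0 vanish.\<close>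
definition zero_first_block :: "'n \<Rightarrow> real^'n^'n \<Rightarrow> bool" where
  "zero_first_block i0 M \<longleftrightarrow> (\<forall>j. M $ i0 $ j = 0 \<and> M $ j $ i0 = 0)"

definition proj_off :: "'n \<Rightarrow> real^'n^'n" where
  "proj_off i0 = (\<chi> i j. if i = j \<and> i \<noteq> i0 then 1 else 0)"

end

theory Submission
  imports Defs
begin

text \<open>
  With \<open>A = k Q\<close> the dynamics are the affine system \<open>\<theta>' = \<omega>\<^sup>u + A \<theta>\<close>. The
  pseudo-inverse inverts \<open>Q\<close> away from the consensus direction (\<open>Qdd Q = Q Qdd = I - W\<close>,
  \<open>Q W = 0\<close>), so the claimed expression solves the same initial value problem; solutions are
  unique because \<open>exp (- t A)\<close> times the difference of two of them has derivative zero.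

  For the limits, \<open>exp (t k Q) \<longrightarrow> W\<close>. Adding a multiple of \<open>I\<close> to \<open>Q\<close> makes it nonnegative
  and, by strong connectivity, irreducible, so \<open>exp (k Q)\<close> is a stochastic matrix with
  positive entries. Such a matrix shrinks the spread \<open>max - min\<close> of a vector by a fixed
  factor (Doeblin), while \<open>z\<^sup>T exp (t k Q) = z\<^sup>T\<close> pins the common limit of the entries of
  \<open>exp (t k Q) v\<close> to \<open>z \<bullet> v\<close>. Substituting into the formula gives both limits; the secular
  term \<open>t W \<omega>\<^sup>u\<close> is annihilated by \<open>Q\<close> and by \<open>B\<^sup>T\<close>.
\<close>

lemma norm_le_sum_abs_entries:
  "norm (A::real^'n^'m) \<le> (\<Sum>i\<in>UNIV. \<Sum>j\<in>UNIV. \<bar>A $ i $ j\<bar>)"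
proof -
  have "norm A \<le> (\<Sum>i\<in>UNIV. norm (A $ i))"
    unfolding norm_vec_def by (rule L2_set_le_sum) simp
  also have "\<dots> \<le> (\<Sum>i\<in>UNIV. \<Sum>j\<in>UNIV. \<bar>A $ i $ j\<bar>)"
    by (intro sum_mono norm_le_l1_cart)
  finally show ?thesis .
qed

lemma matrix_mul_uminus:
  fixes A B :: "real^'n^'n"
  shows "A ** (- B) = - (A ** B)" "(- A) ** B = - (A ** B)" "(- A) *v x = - (A *v x)"
  by (simp_all add: matrix_matrix_mult_def matrix_vector_mult_def vec_eq_iff sum_negf)

lemma matrix_vector_mult_axis: "(A *v axis j 1) $ i = (A::real^'n::finite^'m) $ i $ j"
  by (simp add: matrix_vector_mult_def axis_def if_distrib cong: if_cong)

lemma ones_outer_mult_vector: "ones_outer z *v v = (z \<bullet> v) *\<^sub>R ones"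
  by (simp add: ones_outer_def matrix_vector_mult_def inner_vec_def ones_def vec_eq_iff)

lemma bounded_bilinear_matrix_vector_mult:
  "bounded_bilinear ((*v) :: real^'n^'m \<Rightarrow> real^'n \<Rightarrow> real^'m)"
  by (simp add: bilinear_conv_bounded_bilinear[symmetric] bilinear_def linear_iff algebra_simps
      scaleR_matrix_vector_assoc)

lemma bounded_bilinear_vector_matrix_mult:
  "bounded_bilinear ((v*) :: real^'m \<Rightarrow> real^'n^'m \<Rightarrow> real^'n)"
  by (simp add: bilinear_conv_bounded_bilinear[symmetric] bilinear_def linear_iff algebra_simps
      scaleR_vector_matrix_assoc vector_scaleR_matrix_ac)

lemma tendsto_matrix_columnwise:
  fixes M :: "'a \<Rightarrow> real^'n::finite^'m"
  assumes "\<And>v. ((\<lambda>x. M x *v v) \<longlongrightarrow> L *v v) F"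
  shows "(M \<longlongrightarrow> L) F"
proof (intro vec_tendstoI)
  fix i j
  show "((\<lambda>x. M x $ i $ j) \<longlongrightarrow> L $ i $ j) F"
    using tendsto_vec_nth[OF assms[of "axis j 1"], of i] by (simp add: matrix_vector_mult_axis)
qed

lemma matrix_inv_inverse:
  assumes "invertible A"
  shows "A ** matrix_inv A = mat 1" and "matrix_inv A ** A = mat 1"
  using someI_ex[of "\<lambda>A'. A ** A' = mat 1 \<and> A' ** A = mat 1"] assms
  unfolding invertible_def matrix_inv_def by blast+

lemma mat_pow_nonneg:
  assumes "\<forall>i j. 0 \<le> (A::real^'n::finite^'n) $ i $ j"
  shows "0 \<le> mat_pow A n $ i $ j"
  using assms by (induction n arbitrary: i j) (simp_all add: mat_def matrix_matrix_mult_def sum_nonneg)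

lemma mat_pow_positive_of_path:
  fixes P :: "real^'n::finite^'n"
  assumes nonneg: "\<forall>i j. 0 \<le> P $ i $ j" and path: "(l, i) \<in> {(j, i). 0 < P $ i $ j}\<^sup>*"
  shows "\<exists>m. 0 < mat_pow P m $ i $ l"
  using path
proof (induction rule: rtrancl_induct)
  case base
  show ?case
    by (rule exI[of _ 0]) (simp add: mat_def)
next
  case (step j i)
  then obtain m where m: "0 < mat_pow P m $ j $ l"
    by blast
  have "0 < P $ i $ j * mat_pow P m $ j $ l"
    using step(2) m by simp
  also have "\<dots> \<le> (\<Sum>k\<in>UNIV. P $ i $ k * mat_pow P m $ k $ l)"
    using nonneg by (intro member_le_sum mult_nonneg_nonneg mat_pow_nonneg) auto
  finally show ?case
    by (intro exI[of _ "Suc m"]) (simp add: matrix_matrix_mult_def)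
qed

section \<open>Bounded endomorphisms as a Banach algebra\<close>

text \<open>
  \<open>mat_exp\<close> is obtained from the exponential of a Banach algebra. The matrix type itself carries
  the Frobenius norm, under which \<open>mat 1\<close> does not have norm \<open>1\<close>, so the exponential is computed
  in the algebra of bounded operators and transported back.
\<close>

typedef (overloaded) 'a endo = "UNIV :: ('a::real_normed_vector \<Rightarrow>\<^sub>L 'a) set"
  morphisms blinfun_of_endo endo_of_blinfun ..

setup_lifting type_definition_endo

instantiation endo :: ("{real_normed_vector, perfect_space}") real_normed_algebra_1
begin

lift_definition zero_endo :: "'a endo" is 0 .
lift_definition one_endo :: "'a endo" is id_blinfun .
lift_definition plus_endo :: "'a endo \<Rightarrow> 'a endo \<Rightarrow> 'a endo" is "(+)" .
lift_definition minus_endo :: "'a endo \<Rightarrow> 'a endo \<Rightarrow> 'a endo" is "(-)" .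
lift_definition uminus_endo :: "'a endo \<Rightarrow> 'a endo" is uminus .
lift_definition times_endo :: "'a endo \<Rightarrow> 'a endo \<Rightarrow> 'a endo" is "(o\<^sub>L)" .
lift_definition scaleR_endo :: "real \<Rightarrow> 'a endo \<Rightarrow> 'a endo" is scaleR .
lift_definition norm_endo :: "'a endo \<Rightarrow> real" is norm .
lift_definition dist_endo :: "'a endo \<Rightarrow> 'a endo \<Rightarrow> real" is dist .
lift_definition sgn_endo :: "'a endo \<Rightarrow> 'a endo" is sgn .

definition uniformity_endo :: "('a endo \<times> 'a endo) filter" where
  "uniformity_endo = (INF e\<in>{0 <..}. principal {(x, y). dist x y < e})"

definition open_endo :: "'a endo set \<Rightarrow> bool" where
  "open_endo U = (\<forall>x\<in>U. \<forall>\<^sub>F (x', y) in uniformity. x' = x \<longrightarrow> y \<in> U)"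

instance
proof
  fix a b c :: "'a endo" and r :: real
  show "a * b * c = a * (b * c)" "1 * a = a" "a * 1 = a"
    by (transfer, rule blinfun_eqI, simp)+
  show "(a + b) * c = a * c + b * c" "a * (b + c) = a * b + a * c"
       "r *\<^sub>R a * b = r *\<^sub>R (a * b)" "a * r *\<^sub>R b = r *\<^sub>R (a * b)"
    by (transfer, rule blinfun_eqI, simp add: blinfun.bilinear_simps)+
  show "norm (a * b) \<le> norm a * norm b"
    by transfer (rule norm_blinfun_compose)
  show "norm (1 :: 'a endo) = 1"
    by transfer simp
  show "(0 :: 'a endo) \<noteq> 1"
    by transfer (metis norm_blinfun_id norm_zero zero_neq_one)
next
  show "(uniformity :: ('a endo \<times> 'a endo) filter) = (INF e\<in>{0 <..}. principal {(x, y). dist x y < e})"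
    by (rule uniformity_endo_def)
next
  show "open U = (\<forall>x\<in>U. \<forall>\<^sub>F (x', y) in uniformity. x' = x \<longrightarrow> y \<in> U)"
    for U :: "'a endo set"
    by (rule open_endo_def)
qed (transfer; simp add: dist_norm sgn_div_norm norm_triangle_ineq algebra_simps)+

end

instance endo :: ("{banach, perfect_space}") banach
proof
  fix X :: "nat \<Rightarrow> 'a endo"
  assume "Cauchy X"
  then have "Cauchy (\<lambda>n. blinfun_of_endo (X n))"
    by (simp add: Cauchy_def dist_endo.rep_eq)
  then obtain L where "(\<lambda>n. blinfun_of_endo (X n)) \<longlonglongrightarrow> L"
    by (auto simp: Cauchy_convergent_iff convergent_def)
  then have "X \<longlonglongrightarrow> endo_of_blinfun L"
    by (simp add: tendsto_iff dist_endo.rep_eq endo_of_blinfun_inverse)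
  then show "convergent X"
    by (auto simp: convergent_def)
qed

definition matrix_of_endo :: "(real^'n::finite) endo \<Rightarrow> real^'n^'n" where
  "matrix_of_endo f = matrix (blinfun_of_endo f)"

definition endo_of_matrix :: "real^'n^'n \<Rightarrow> (real^'n::finite) endo" where
  "endo_of_matrix A = endo_of_blinfun (Blinfun ((*v) A))"

lemma matrix_of_endo_of_matrix [simp]: "matrix_of_endo (endo_of_matrix A) = A"
  by (simp add: matrix_of_endo_def endo_of_matrix_def endo_of_blinfun_inverse
      bounded_linear_Blinfun_apply)

lemma matrix_of_endo_inject [simp]: "matrix_of_endo f = matrix_of_endo g \<longleftrightarrow> f = g"
proof
  assume "matrix_of_endo f = matrix_of_endo g"
  then have "blinfun_apply (blinfun_of_endo f) = blinfun_apply (blinfun_of_endo g)"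
    unfolding matrix_of_endo_def by (metis matrix_vector_mul(3) blinfun.bounded_linear_right)
  then show "f = g"
    by (metis blinfun_apply_inject blinfun_of_endo_inject)
qed simp

lemma matrix_of_endo_times: "matrix_of_endo (f * g) = matrix_of_endo f ** matrix_of_endo g"
  unfolding matrix_of_endo_def times_endo.rep_eq blinfun_compose.rep_eq
  by (rule matrix_compose) (simp_all add: linear_conv_bounded_linear blinfun.bounded_linear_right)

lemma matrix_of_endo_one: "matrix_of_endo 1 = mat 1"
  by (simp add: matrix_of_endo_def one_endo.rep_eq matrix_id_mat_1[unfolded id_def])

lemma matrix_of_endo_linear:
  "matrix_of_endo (f + g) = matrix_of_endo f + matrix_of_endo g"
  "matrix_of_endo (r *\<^sub>R f) = r *\<^sub>R matrix_of_endo f"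
  "matrix_of_endo 0 = 0"
  by (simp_all add: matrix_of_endo_def matrix_def plus_endo.rep_eq scaleR_endo.rep_eq zero_endo.rep_eq
      vec_eq_iff blinfun.bilinear_simps)

lemma bounded_linear_matrix_of_endo: "bounded_linear (matrix_of_endo :: (real^'n::finite) endo \<Rightarrow> _)"
proof (rule bounded_linear_intro[where K = "real CARD('n) * real CARD('n)"])
  fix f g :: "(real^'n) endo" and r :: real
  show "matrix_of_endo (f + g) = matrix_of_endo f + matrix_of_endo g"
       "matrix_of_endo (r *\<^sub>R f) = r *\<^sub>R matrix_of_endo f"
    by (rule matrix_of_endo_linear)+
  have entry: "\<bar>matrix_of_endo f $ i $ j\<bar> \<le> norm f" for i j
  proof -
    have "\<bar>matrix_of_endo f $ i $ j\<bar> \<le> norm (blinfun_of_endo f (axis j 1))"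
      by (simp add: matrix_of_endo_def matrix_def component_le_norm_cart)
    also have "\<dots> \<le> norm f"
      using norm_blinfun[of "blinfun_of_endo f" "axis j 1"] by (simp add: norm_endo.rep_eq)
    finally show ?thesis .
  qed
  have "norm (matrix_of_endo f) \<le> (\<Sum>i\<in>UNIV. \<Sum>j\<in>UNIV. \<bar>matrix_of_endo f $ i $ j\<bar>)"
    by (rule norm_le_sum_abs_entries)
  also have "\<dots> \<le> (\<Sum>i\<in>(UNIV::'n set). \<Sum>j\<in>(UNIV::'n set). norm f)"
    by (intro sum_mono entry)
  finally have "norm (matrix_of_endo f) \<le> (\<Sum>i\<in>(UNIV::'n set). \<Sum>j\<in>(UNIV::'n set). norm f)" .
  then show "norm (matrix_of_endo f) \<le> norm f * (real CARD('n) * real CARD('n))"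
    by (simp add: mult_ac)
qed

lemma matrix_of_endo_power: "matrix_of_endo (f ^ n) = mat_pow (matrix_of_endo f) n"
  by (induction n) (simp_all add: matrix_of_endo_times matrix_of_endo_one)

lemma mat_exp_eq_exp_endo:
  fixes A :: "real^'n::finite^'n"
  shows "mat_exp A = matrix_of_endo (exp (endo_of_matrix A))"
proof -
  interpret bounded_linear "matrix_of_endo :: (real^'n) endo \<Rightarrow> _"
    by (rule bounded_linear_matrix_of_endo)
  have "mat_exp (matrix_of_endo f) = matrix_of_endo (exp f)" for f :: "(real^'n) endo"
    unfolding exp_def mat_exp_def
    by (simp add: suminf[OF summable_exp_generic] scaleR matrix_of_endo_power
        divide_inverse_commute)
  from this[of "endo_of_matrix A"] show ?thesis
    by simp
qed

lemma endo_of_matrix_hom: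
  "endo_of_matrix (A + B) = endo_of_matrix A + endo_of_matrix B"
  "endo_of_matrix (r *\<^sub>R A) = r *\<^sub>R endo_of_matrix A"
  "endo_of_matrix (A ** B) = endo_of_matrix A * endo_of_matrix B"
  "endo_of_matrix 0 = 0"
  "endo_of_matrix (mat 1) = 1"
  by (simp_all flip: matrix_of_endo_inject add: matrix_of_endo_linear matrix_of_endo_times
      matrix_of_endo_one)

section \<open>The matrix exponential\<close>

lemma mat_exp_zero: "mat_exp (0 :: real^'n::finite^'n) = mat 1"
  by (simp add: mat_exp_eq_exp_endo endo_of_matrix_hom matrix_of_endo_one)

lemma mat_exp_add_commuting:
  fixes A B :: "real^'n::finite^'n"
  assumes "A ** B = B ** A"
  shows "mat_exp (A + B) = mat_exp A ** mat_exp B"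
proof -
  have "endo_of_matrix A * endo_of_matrix B = endo_of_matrix B * endo_of_matrix A"
    by (simp flip: endo_of_matrix_hom add: assms)
  then show ?thesis
    by (simp add: mat_exp_eq_exp_endo endo_of_matrix_hom exp_add_commuting matrix_of_endo_times)
qed

lemma mat_exp_minus_inverse: "mat_exp A ** mat_exp (- A) = mat 1"
  for A :: "real^'n::finite^'n"
  using mat_exp_add_commuting[of A "- A"] by (simp add: mat_exp_zero matrix_mul_uminus)

lemma mat_exp_scaleR_mat_1: "mat_exp (c *\<^sub>R mat 1 :: real^'n::finite^'n) = exp c *\<^sub>R mat 1"
proof -
  have "exp (c *\<^sub>R 1 :: (real^'n) endo) = exp c *\<^sub>R 1"
    using exp_of_real[of c, where 'a = "(real^'n) endo"] by (simp add: of_real_def)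
  then show ?thesis
    by (simp add: mat_exp_eq_exp_endo endo_of_matrix_hom matrix_of_endo_linear matrix_of_endo_one)
qed

lemma mat_exp_add_scalar:
  fixes A :: "real^'n::finite^'n"
  shows "mat_exp (A + c *\<^sub>R mat 1) = exp c *\<^sub>R mat_exp A"
proof -
  have "A ** (c *\<^sub>R mat 1) = (c *\<^sub>R mat 1) ** A"
    by (simp add: matrix_scalar_ac flip: scalar_matrix_assoc)
  then have "mat_exp (A + c *\<^sub>R mat 1) = mat_exp A ** mat_exp (c *\<^sub>R mat 1)"
    by (rule mat_exp_add_commuting)
  also have "\<dots> = exp c *\<^sub>R mat_exp A"
    by (simp only: mat_exp_scaleR_mat_1 matrix_scalar_ac matrix_mul_rid)
  finally show ?thesis .
qed

lemma mat_exp_scaleR_add: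
  fixes A :: "real^'n::finite^'n"
  shows "mat_exp ((s + t) *\<^sub>R A) = mat_exp (s *\<^sub>R A) ** mat_exp (t *\<^sub>R A)"
  by (simp add: scaleR_add_left mat_exp_add_commuting matrix_scalar_ac flip: scalar_matrix_assoc)

lemma mat_exp_scaleR_commute:
  fixes A :: "real^'n::finite^'n"
  shows "mat_exp (t *\<^sub>R A) ** A = A ** mat_exp (t *\<^sub>R A)"
proof -
  have "matrix_of_endo (exp (t *\<^sub>R endo_of_matrix A) * endo_of_matrix A) =
      matrix_of_endo (endo_of_matrix A * exp (t *\<^sub>R endo_of_matrix A))"
    by (simp only: exp_times_scaleR_commute)
  then show ?thesis
    by (simp add: mat_exp_eq_exp_endo endo_of_matrix_hom matrix_of_endo_times)
qed

lemma has_vector_derivative_mat_exp: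
  fixes A :: "real^'n::finite^'n"
  shows "((\<lambda>t. mat_exp (t *\<^sub>R A)) has_vector_derivative mat_exp (t *\<^sub>R A) ** A) (at t within S)"
  using bounded_linear.has_vector_derivative[OF bounded_linear_matrix_of_endo
      exp_scaleR_has_vector_derivative_right[of "endo_of_matrix A"]]
  by (simp add: mat_exp_eq_exp_endo endo_of_matrix_hom matrix_of_endo_times)

lemma has_vector_derivative_mat_exp_apply:
  fixes A :: "real^'n::finite^'n"
  shows "((\<lambda>t. mat_exp (t *\<^sub>R A) *v v) has_vector_derivative A *v (mat_exp (t *\<^sub>R A) *v v))
    (at t within S)"
  using bounded_linear.has_vector_derivative[OF bounded_bilinear.bounded_linear_left[OF
      bounded_bilinear_matrix_vector_mult] has_vector_derivative_mat_exp]
  by (simp add: mat_exp_scaleR_commute matrix_vector_mul_assoc)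

lemma summable_mat_exp: "summable (\<lambda>n. (1 / fact n) *\<^sub>R mat_pow (A::real^'n::finite^'n) n)"
  using bounded_linear.summable[OF bounded_linear_matrix_of_endo summable_exp_generic[of "endo_of_matrix A"]]
  by (simp add: matrix_of_endo_linear matrix_of_endo_power divide_inverse_commute)

lemma mat_exp_sums: "(\<lambda>n. (1 / fact n) *\<^sub>R mat_pow (A::real^'n::finite^'n) n) sums mat_exp A"
  unfolding mat_exp_def by (rule summable_sums[OF summable_mat_exp])

lemma mat_exp_fixes_kernel:
  fixes A :: "real^'n::finite^'n"
  assumes "A *v u = 0"
  shows "mat_exp A *v u = u"
proof -
  have power: "mat_pow A n *v u = (if n = 0 then u else 0)" for n
    by (induction n) (auto simp: assms simp flip: matrix_vector_mul_assoc)
  have "(\<lambda>n. ((1 / fact n) *\<^sub>R mat_pow A n) *v u) sums (mat_exp A *v u)"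
    by (rule bounded_linear.sums[OF bounded_bilinear.bounded_linear_left[OF
          bounded_bilinear_matrix_vector_mult] mat_exp_sums])
  moreover have "(\<lambda>n. ((1 / fact n) *\<^sub>R mat_pow A n) *v u) = (\<lambda>n. if n = 0 then u else 0)"
    by (simp add: fun_eq_iff power flip: scaleR_matrix_vector_assoc)
  ultimately show ?thesis
    using sums_single[of 0 "\<lambda>_. u"] sums_unique2 by fastforce
qed

lemma mat_exp_fixes_left_kernel:
  fixes A :: "real^'n::finite^'n"
  assumes "u v* A = 0"
  shows "u v* mat_exp A = u"
proof -
  have power: "u v* mat_pow A n = (if n = 0 then u else 0)" for n
    by (cases n) (auto simp: assms simp flip: vector_matrix_mul_assoc)
  have "(\<lambda>n. u v* ((1 / fact n) *\<^sub>R mat_pow A n)) sums (u v* mat_exp A)"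
    by (rule bounded_linear.sums[OF bounded_bilinear.bounded_linear_right[OF
          bounded_bilinear_vector_matrix_mult] mat_exp_sums])
  moreover have "(\<lambda>n. u v* ((1 / fact n) *\<^sub>R mat_pow A n)) = (\<lambda>n. if n = 0 then u else 0)"
    by (simp add: fun_eq_iff power vector_scaleR_matrix_ac)
  ultimately show ?thesis
    using sums_single[of 0 "\<lambda>_. u"] sums_unique2 by fastforce
qed

lemma mat_exp_entry_sums:
  "(\<lambda>n. (1 / fact n) * mat_pow (A::real^'n::finite^'n) n $ i $ j) sums (mat_exp A $ i $ j)"
proof -
  have "bounded_linear (\<lambda>M::real^'n^'n. M $ i $ j)"
    using bounded_linear_compose[OF bounded_linear_vec_nth[of j] bounded_linear_vec_nth[of i]] by simp
  from bounded_linear.sums[OF this mat_exp_sums[of A]] show ?thesis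
    by simp
qed

lemma mat_exp_nonneg:
  assumes "\<forall>i j. 0 \<le> (A::real^'n::finite^'n) $ i $ j"
  shows "0 \<le> mat_exp A $ i $ j"
  by (rule sums_le[OF _ sums_zero mat_exp_entry_sums]) (simp add: mat_pow_nonneg[OF assms])

lemma mat_exp_ge_power:
  assumes "\<forall>i j. 0 \<le> (A::real^'n::finite^'n) $ i $ j"
  shows "mat_pow A n $ i $ j / fact n \<le> mat_exp A $ i $ j"
  using sum_le_suminf[OF sums_summable[OF mat_exp_entry_sums[of A i j]], of "{n}"]
    sums_unique[OF mat_exp_entry_sums[of A i j]] mat_pow_nonneg[OF assms]
  by simp

lemma mat_exp_pos_of_paths:
  fixes P :: "real^'n::finite^'n"
  assumes nonneg: "\<forall>i j. 0 \<le> P $ i $ j" and path: "(j, i) \<in> {(j, i). 0 < P $ i $ j}\<^sup>*"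
  shows "0 < mat_exp P $ i $ j"
proof -
  obtain m where "0 < mat_pow P m $ i $ j"
    using mat_pow_positive_of_path[OF nonneg path] by blast
  then have "0 < mat_pow P m $ i $ j / fact m"
    by simp
  also have "\<dots> \<le> mat_exp P $ i $ j"
    by (rule mat_exp_ge_power[OF nonneg])
  finally show ?thesis .
qed

section \<open>Linear differential equations with constant coefficients\<close>

lemma linear_ode_solution:
  fixes A :: "real^'n::finite^'n" and x :: "real \<Rightarrow> real^'n"
  assumes deriv: "\<forall>t\<ge>0. (x has_vector_derivative A *v x t) (at t within {0..})"
    and "0 \<le> t"
  shows "x t = mat_exp (t *\<^sub>R A) *v x 0"
proof -
  define y where "y s = mat_exp (s *\<^sub>R (- A)) *v x s" for s
  have "(y has_derivative (\<lambda>h. 0)) (at s within {0..})" if "s \<in> {0..}" for s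
  proof -
    have "(y has_vector_derivative
        mat_exp (s *\<^sub>R (- A)) *v (A *v x s) + (mat_exp (s *\<^sub>R (- A)) ** (- A)) *v x s)
        (at s within {0..})"
      unfolding y_def
      using that deriv by (intro bounded_bilinear.has_vector_derivative[OF
          bounded_bilinear_matrix_vector_mult has_vector_derivative_mat_exp]) simp
    then show ?thesis
      by (simp add: has_vector_derivative_def matrix_vector_mul_assoc matrix_mul_uminus)
  qed
  then obtain c where "\<forall>s\<in>{0..}. y s = c"
    using has_derivative_zero_constant[of "{0::real..}" y] by auto
  with assms have "y t = y 0"
    by simp
  then have "mat_exp (- (t *\<^sub>R A)) *v x t = x 0"
    by (simp add: y_def mat_exp_zero)
  then show ?thesis
    by (metis mat_exp_minus_inverse matrix_vector_mul_assoc matrix_vector_mul_lid)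
qed

lemma forced_linear_ode_solution:
  fixes A G P :: "real^'n::finite^'n" and x :: "real \<Rightarrow> real^'n"
  assumes GA: "G ** A = mat 1 - P" and AG: "A ** G = mat 1 - P" and AP: "A ** P = 0"
    and deriv: "\<forall>t\<ge>0. (x has_vector_derivative u + A *v x t) (at t within {0..})"
    and "0 \<le> t"
  shows "x t = (t *\<^sub>R P + G ** (mat_exp (t *\<^sub>R A) - mat 1)) *v u + mat_exp (t *\<^sub>R A) *v x 0"
proof -
  define E where "E s = mat_exp (s *\<^sub>R A)" for s
  define y where "y s = s *\<^sub>R (P *v u) + G *v (E s *v u - u) + E s *v x 0" for s
  have y_eq: "y s = (s *\<^sub>R P + G ** (E s - mat 1)) *v u + E s *v x 0" for s
    by (simp add: y_def algebra_simps flip: scaleR_matrix_vector_assoc matrix_vector_mul_assoc)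
  have "(y has_vector_derivative P *v u + G *v (A *v (E s *v u)) + A *v (E s *v x 0)) (at s within S)"
    for s S
    unfolding y_def E_def
    by (rule derivative_eq_intros has_vector_derivative_mat_exp_apply
        bounded_linear.has_vector_derivative[OF matrix_vector_mul_bounded_linear] | simp)+
  moreover have "P *v u + G *v (A *v (E s *v u)) + A *v (E s *v x 0) = u + A *v y s" for s
  proof -
    have "G *v (A *v w) = w - P *v w" "A *v (G *v w) = w - P *v w" "A *v (P *v w) = 0" for w
      using GA AG AP by (simp_all add: matrix_vector_mul_assoc matrix_vector_mult_diff_rdistrib)
    then show ?thesis
      by (simp add: y_def matrix_vector_right_distrib matrix_vector_mult_diff_distrib
          matrix_vector_mult_scaleR)
  qed
  ultimately have "((\<lambda>s. x s - y s) has_vector_derivative A *v (x s - y s)) (at s within {0..})"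
    if "s \<ge> 0" for s
    using deriv that by (auto intro!: derivative_eq_intros simp: algebra_simps)
  then have "x t - y t = mat_exp (t *\<^sub>R A) *v (x 0 - y 0)"
    using linear_ode_solution[of "\<lambda>s. x s - y s"] \<open>0 \<le> t\<close> by blast
  also have "x 0 - y 0 = 0"
    by (simp add: y_def E_def mat_exp_zero)
  finally show ?thesis
    by (simp add: y_eq E_def)
qed

lemma forced_linear_ode_limits:
  fixes A G P :: "real^'n::finite^'n" and M :: "real^'n^'m" and x :: "real \<Rightarrow> real^'n"
  assumes solution: "\<forall>t\<ge>0. x t =
      (t *\<^sub>R P + G ** (mat_exp (t *\<^sub>R A) - mat 1)) *v u + mat_exp (t *\<^sub>R A) *v x 0"
    and limit: "((\<lambda>t. mat_exp (t *\<^sub>R A)) \<longlongrightarrow> P) at_top"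
    and GP: "G ** P = 0" and AP: "A ** P = 0" and AG: "A ** G = mat 1 - P" and MP: "M ** P = 0"
  shows "((\<lambda>t. u + A *v x t) \<longlongrightarrow> P *v u) at_top"
    and "((\<lambda>t. M *v x t) \<longlongrightarrow> - (M *v (G *v u))) at_top"
proof -
  have "\<forall>\<^sub>F t in at_top. G *v (mat_exp (t *\<^sub>R A) *v u - u) + mat_exp (t *\<^sub>R A) *v x 0 =
      x t - t *\<^sub>R (P *v u)"
    unfolding eventually_at_top_linorder using solution
    by (intro exI[of _ 0]) (simp add: algebra_simps flip: scaleR_matrix_vector_assoc matrix_vector_mul_assoc)
  moreover have "((\<lambda>t. G *v (mat_exp (t *\<^sub>R A) *v u - u) + mat_exp (t *\<^sub>R A) *v x 0) \<longlongrightarrow>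
      G *v (P *v u - u) + P *v x 0) at_top"
    by (intro tendsto_intros bounded_bilinear.tendsto[OF bounded_bilinear_matrix_vector_mult] limit)
  moreover have "G *v (P *v u - u) + P *v x 0 = P *v x 0 - G *v u"
    using GP by (simp add: matrix_vector_mult_diff_distrib matrix_vector_mul_assoc)
  ultimately have deviation: "((\<lambda>t. x t - t *\<^sub>R (P *v u)) \<longlongrightarrow> P *v x 0 - G *v u) at_top"
    using tendsto_cong by fastforce
  have kills_P: "N ** P = 0 \<Longrightarrow> N *v (x t - t *\<^sub>R (P *v u)) = N *v x t"
    for N :: "real^'n^'l" and t
    by (simp add: matrix_vector_mult_diff_distrib matrix_vector_mult_scaleR matrix_vector_mul_assoc)
  have "((\<lambda>t. u + A *v (x t - t *\<^sub>R (P *v u))) \<longlongrightarrow> u + A *v (P *v x 0 - G *v u)) at_top"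
    by (intro tendsto_intros bounded_linear.tendsto[OF matrix_vector_mul_bounded_linear] deviation)
  moreover have "u + A *v (P *v x 0 - G *v u) = P *v u"
    using AP AG by (simp add: matrix_vector_mult_diff_distrib matrix_vector_mul_assoc
        matrix_vector_mult_diff_rdistrib)
  ultimately show "((\<lambda>t. u + A *v x t) \<longlongrightarrow> P *v u) at_top"
    by (simp add: kills_P[OF AP])
  have "((\<lambda>t. M *v x t) \<longlongrightarrow> M *v (P *v x 0 - G *v u)) at_top"
    using bounded_linear.tendsto[OF matrix_vector_mul_bounded_linear deviation, of M]
    unfolding kills_P[OF MP] .
  then show "((\<lambda>t. M *v x t) \<longlongrightarrow> - (M *v (G *v u))) at_top"
    using MP by (simp add: matrix_vector_mult_diff_distrib matrix_vector_mul_assoc)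
qed

section \<open>Ergodicity of irreducible rate matrices\<close>

definition in_band :: "real^'n \<Rightarrow> real \<Rightarrow> real \<Rightarrow> bool" where
  "in_band y a w \<longleftrightarrow> (\<forall>i. a \<le> y $ i \<and> y $ i \<le> a + w)"

lemma stochastic_matrix_contracts_band:
  fixes N :: "real^'n::finite^'n"
  assumes lower: "\<forall>i j. g \<le> N $ i $ j" and rows: "N *v ones = ones" and y: "in_band y a w"
  shows "in_band (N *v y) (a + g * (\<Sum>j\<in>UNIV. y $ j - a)) ((1 - real CARD('n) * g) * w)"
  unfolding in_band_def
proof
  fix i
  define s where "s = (\<Sum>j\<in>UNIV. y $ j - a)"
  have row_sum: "(\<Sum>j\<in>UNIV. N $ i $ j) = 1"
    using rows by (simp add: vec_eq_iff matrix_vector_mult_def ones_def)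
  have "(N *v y) $ i - a = (\<Sum>j\<in>UNIV. N $ i $ j * (y $ j - a))"
    by (simp add: matrix_vector_mult_def right_diff_distrib sum_subtractf
        flip: sum_distrib_right row_sum)
  moreover have "(\<Sum>j\<in>UNIV. g * (y $ j - a)) \<le> (\<Sum>j\<in>UNIV. N $ i $ j * (y $ j - a))"
    using lower y by (intro sum_mono mult_right_mono) (auto simp: in_band_def)
  ultimately have low: "g * s \<le> (N *v y) $ i - a"
    by (simp add: s_def sum_distrib_left)
  have "a + w - (N *v y) $ i = (\<Sum>j\<in>UNIV. N $ i $ j * (a + w - y $ j))"
    by (simp add: matrix_vector_mult_def right_diff_distrib sum_subtractf
        flip: sum_distrib_right row_sum)
  moreover have "(\<Sum>j\<in>UNIV. g * (a + w - y $ j)) \<le> (\<Sum>j\<in>UNIV. N $ i $ j * (a + w - y $ j))"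
    using lower y by (intro sum_mono mult_right_mono) (auto simp: in_band_def)
  moreover have "(\<Sum>j\<in>UNIV. g * (a + w - y $ j)) = g * (real CARD('n) * w - s)"
    by (simp add: s_def sum_subtractf algebra_simps flip: sum_distrib_left)
  ultimately have high: "g * (real CARD('n) * w - s) \<le> a + w - (N *v y) $ i"
    by simp
  show "a + g * s \<le> (N *v y) $ i \<and> (N *v y) $ i \<le> a + g * s + (1 - real CARD('n) * g) * w"
    using low high by (simp add: algebra_simps)
qed

lemma probability_vector_in_band:
  fixes z u :: "real^'n::finite"
  assumes "\<forall>i. 0 \<le> z $ i" and "ones \<bullet> z = 1" and "in_band u a w"
  shows "a \<le> z \<bullet> u \<and> z \<bullet> u \<le> a + w"
proof -
  have sum_z: "(\<Sum>j\<in>UNIV. z $ j) = 1"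
    using assms(2) by (simp add: inner_vec_def ones_def)
  have "(\<Sum>j\<in>UNIV. z $ j * a) \<le> z \<bullet> u" "z \<bullet> u \<le> (\<Sum>j\<in>UNIV. z $ j * (a + w))"
    using assms(1,3) unfolding inner_vec_def in_band_def
    by (auto intro!: sum_mono mult_left_mono)
  then show ?thesis
    by (simp add: sum_z flip: sum_distrib_right)
qed

lemma in_band_norm_diff_le:
  fixes y :: "real^'n::finite"
  assumes "in_band y a w" and "a \<le> c" and "c \<le> a + w"
  shows "norm (y - c *\<^sub>R ones) \<le> real CARD('n) * w"
proof -
  have "norm (y - c *\<^sub>R ones) \<le> (\<Sum>i\<in>UNIV. \<bar>(y - c *\<^sub>R ones) $ i\<bar>)"
    by (rule norm_le_l1_cart)
  also have "\<dots> \<le> (\<Sum>i\<in>(UNIV::'n set). w)"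
  proof (rule sum_mono)
    fix i
    have "a \<le> y $ i" "y $ i \<le> a + w"
      using assms(1) by (auto simp: in_band_def)
    then show "\<bar>(y - c *\<^sub>R ones) $ i\<bar> \<le> w"
      using assms(2,3) by (simp add: ones_def abs_le_iff)
  qed
  finally show ?thesis
    by simp
qed

lemma positive_stochastic_matrix_contraction:
  fixes N :: "real^'n::finite^'n"
  assumes positive: "\<forall>i j. 0 < N $ i $ j" and rows: "N *v ones = ones"
  obtains \<rho> where "0 \<le> \<rho>" "\<rho> < 1"
    and "\<And>y a w. in_band y a w \<Longrightarrow> \<exists>a'. in_band (N *v y) a' (\<rho> * w)"
proof
  define g where "g = Min ((\<lambda>(i, j). N $ i $ j) ` UNIV)"
  have g_le: "\<forall>i j. g \<le> N $ i $ j"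
    unfolding g_def by (auto intro!: Min_le image_eqI[where x = "(i, j)" for i j])
  have "0 < g"
    unfolding g_def using positive by (subst Min_gr_iff) auto
  then show "1 - real CARD('n) * g < 1"
    by simp
  fix i :: 'n
  have "(\<Sum>j\<in>(UNIV::'n set). g) \<le> (\<Sum>j\<in>UNIV. N $ i $ j)"
    using g_le by (intro sum_mono) auto
  also have "\<dots> = 1"
    using rows by (simp add: vec_eq_iff matrix_vector_mult_def ones_def)
  finally show "0 \<le> 1 - real CARD('n) * g"
    by simp
  show "\<exists>a'. in_band (N *v y) a' ((1 - real CARD('n) * g) * w)" if "in_band y a w" for y a w
    using stochastic_matrix_contracts_band[OF g_le rows that] by blast
qed

lemma stochastic_semigroup_tendsto:
  fixes E :: "real \<Rightarrow> real^'n::finite^'n" and z :: "real^'n"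
  assumes semigroup: "\<And>s t. 0 \<le> s \<Longrightarrow> 0 \<le> t \<Longrightarrow> E (s + t) = E s ** E t"
    and E0: "E 0 = mat 1"
    and nonneg: "\<And>t. 0 \<le> t \<Longrightarrow> \<forall>i j. 0 \<le> E t $ i $ j"
    and rows: "\<And>t. 0 \<le> t \<Longrightarrow> E t *v ones = ones"
    and invariant: "\<And>t. 0 \<le> t \<Longrightarrow> z v* E t = z"
    and positive: "\<forall>i j. 0 < E 1 $ i $ j"
    and z_nonneg: "\<forall>i. 0 \<le> z $ i" and z_sum: "ones \<bullet> z = 1"
  shows "((\<lambda>t. E t *v v) \<longlongrightarrow> (z \<bullet> v) *\<^sub>R ones) at_top"
proof -
  obtain \<rho> where \<rho>: "0 \<le> \<rho>" "\<rho> < 1"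
    and contract: "\<And>y a w. in_band y a w \<Longrightarrow> \<exists>a'. in_band (E 1 *v y) a' (\<rho> * w)"
    using positive_stochastic_matrix_contraction[OF positive rows[of 1]] by auto
  \<comment> \<open>Integer times shrink the band geometrically; the fractional rest and \<open>z\<close> stay inside it.\<close>
  define w where "w = 2 * norm v"
  have "in_band v (- norm v) w"
    unfolding in_band_def w_def
    using component_le_norm_cart[of v] by (smt (verit))
  then have steps: "\<exists>a. in_band (E (real m) *v v) a (\<rho> ^ m * w)" for m
  proof (induction m)
    case (Suc m)
    then obtain a where "in_band (E (real m) *v v) a (\<rho> ^ m * w)"
      by blast
    then obtain a' where "in_band (E 1 *v (E (real m) *v v)) a' (\<rho> * (\<rho> ^ m * w))"
      using contract by blast
    moreover have "E (real (Suc m)) = E 1 ** E (real m)"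
      using semigroup[of 1 "real m"] by (simp add: add.commute)
    ultimately show ?case
      by (auto simp: matrix_vector_mul_assoc mult.assoc)
  qed (auto simp: E0)
  have bound:
    "norm (E t *v v - (z \<bullet> v) *\<^sub>R ones) \<le> real CARD('n) * (\<rho> ^ nat \<lfloor>t\<rfloor> * w)"
    if "0 \<le> t" for t
  proof -
    define m where "m = nat \<lfloor>t\<rfloor>"
    have r: "0 \<le> t - real m"
      using that by (simp add: m_def)
    obtain a where "in_band (E (real m) *v v) a (\<rho> ^ m * w)"
      using steps by blast
    then have "in_band (E (t - real m) *v (E (real m) *v v)) a (\<rho> ^ m * w)"
      using stochastic_matrix_contracts_band[of 0 "E (t - real m)"] nonneg[OF r] rows[OF r]
      by simp
    moreover have "E t = E (t - real m) ** E (real m)"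
      using semigroup[OF r, of "real m"] by simp
    ultimately have band: "in_band (E t *v v) a (\<rho> ^ m * w)"
      by (simp add: matrix_vector_mul_assoc)
    moreover have "z \<bullet> (E t *v v) = z \<bullet> v"
      using invariant[OF that] by (metis dot_lmul_matrix)
    ultimately show ?thesis
      using probability_vector_in_band[OF z_nonneg z_sum band] in_band_norm_diff_le[OF band]
      by (simp add: m_def)
  qed
  have "((\<lambda>t. \<rho> ^ nat \<lfloor>t\<rfloor>) \<longlongrightarrow> 0) at_top"
    using LIMSEQ_power_zero[of \<rho>] \<rho>
    by (intro filterlim_compose[OF _ filterlim_compose[OF filterlim_nat_sequentially
          filterlim_floor_sequentially]]) simp_all
  then have "((\<lambda>t. real CARD('n) * (\<rho> ^ nat \<lfloor>t\<rfloor> * w)) \<longlongrightarrow> 0) at_top"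
    by (auto intro!: tendsto_eq_intros)
  then have "((\<lambda>t. E t *v v - (z \<bullet> v) *\<^sub>R ones) \<longlongrightarrow> 0) at_top"
    by (rule Lim_null_comparison[rotated])
      (use bound in \<open>auto simp: eventually_at_top_linorder\<close>)
  then show ?thesis
    by (simp add: Lim_null[symmetric])
qed

lemma rate_matrix_exp_tendsto:
  fixes R :: "real^'n::finite^'n" and z :: "real^'n"
  assumes offdiag: "\<forall>i j. i \<noteq> j \<longrightarrow> 0 \<le> R $ i $ j"
    and irreducible: "\<forall>i j. (j, i) \<in> {(j, i). 0 < R $ i $ j}\<^sup>*"
    and rows: "R *v ones = 0" and left: "z v* R = 0"
    and z_nonneg: "\<forall>i. 0 \<le> z $ i" and z_sum: "ones \<bullet> z = 1"
  shows "((\<lambda>t. mat_exp (t *\<^sub>R R)) \<longlongrightarrow> ones_outer z) at_top"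
proof -
  define d where "d = (\<Sum>i\<in>UNIV. \<bar>R $ i $ i\<bar>)"
  \<comment> \<open>\<open>d\<close> dominates the diagonal, so \<open>P\<close> is nonnegative with the off-diagonal pattern of \<open>R\<close>.\<close>
  define P where "P = R + d *\<^sub>R mat 1"
  have diag: "\<bar>R $ i $ i\<bar> \<le> d" for i
    unfolding d_def by (rule member_le_sum) auto
  have P_nonneg: "\<forall>i j. 0 \<le> P $ i $ j"
    using offdiag diag by (auto simp: P_def mat_def abs_le_iff) (smt (verit))
  have "{(j, i). 0 < R $ i $ j} \<subseteq> {(j, i). 0 < P $ i $ j}"
    using diag by (auto simp: P_def mat_def) (smt (verit))
  then have P_paths: "(j, i) \<in> {(j, i). 0 < P $ i $ j}\<^sup>*" for i j
    using irreducible rtrancl_mono by blast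
  have E_eq: "mat_exp (t *\<^sub>R R) = exp (- (t * d)) *\<^sub>R mat_exp (t *\<^sub>R P)" for t
    using mat_exp_add_scalar[of "t *\<^sub>R P" "- (t * d)"] by (simp add: P_def algebra_simps)
  have "((\<lambda>t. mat_exp (t *\<^sub>R R) *v v) \<longlongrightarrow> (z \<bullet> v) *\<^sub>R ones) at_top" for v
  proof (rule stochastic_semigroup_tendsto[OF mat_exp_scaleR_add _ _ _ _ _ z_nonneg z_sum])
    show "mat_exp (0 *\<^sub>R R) = mat 1"
      by (simp add: mat_exp_zero)
    show "\<forall>i j. 0 \<le> mat_exp (t *\<^sub>R R) $ i $ j" if "0 \<le> t" for t
      using that P_nonneg by (simp add: E_eq mat_exp_nonneg)
    show "mat_exp (t *\<^sub>R R) *v ones = ones" for t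
      using rows by (intro mat_exp_fixes_kernel) (simp flip: scaleR_matrix_vector_assoc)
    show "z v* mat_exp (t *\<^sub>R R) = z" for t
      using left by (intro mat_exp_fixes_left_kernel) (simp add: vector_scaleR_matrix_ac)
    show "\<forall>i j. 0 < mat_exp (1 *\<^sub>R R) $ i $ j"
      using E_eq[of 1] mat_exp_pos_of_paths[OF P_nonneg P_paths] by simp
  qed
  then show ?thesis
    by (intro tendsto_matrix_columnwise) (simp add: ones_outer_mult_vector)
qed

section \<open>The graph Laplacian and its pseudo-inverse\<close>

lemma transpose_incidence_ones: "transpose (incidence_mat src dst) *v ones = 0"
  by (simp add: vec_eq_iff matrix_vector_mult_def transpose_def incidence_mat_def src_mat_def
      dst_mat_def ones_def sum_subtractf)

lemma transpose_incidence_ones_outer: "transpose (incidence_mat src dst) ** ones_outer z = 0"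
  by (simp add: matrix_eq ones_outer_mult_vector matrix_vector_mult_scaleR transpose_incidence_ones
      del: transpose_matrix_vector flip: matrix_vector_mul_assoc)

lemma laplacian_offdiag:
  fixes src dst :: "'m::finite \<Rightarrow> 'n::finite"
  assumes "i \<noteq> j"
  shows "(dst_mat dst ** transpose (incidence_mat src dst)) $ i $ j = real (card {e. src e = j \<and> dst e = i})"
proof -
  have "(dst_mat dst ** transpose (incidence_mat src dst)) $ i $ j =
      (\<Sum>e\<in>UNIV. if src e = j \<and> dst e = i then 1 else 0)"
    using assms unfolding matrix_matrix_mult_def
    by (auto simp: transpose_def incidence_mat_def src_mat_def dst_mat_def intro!: sum.cong)
  then show ?thesis
    by (simp add: sum.If_cases)
qed

lemma laplacian_exp_tendsto:
  fixes src dst :: "'m::finite \<Rightarrow> 'n::finite" and z :: "real^'n"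
  defines "Q \<equiv> dst_mat dst ** transpose (incidence_mat src dst)"
  assumes conn: "strongly_connected src dst" and no_loops: "\<forall>e. src e \<noteq> dst e"
    and z_nonneg: "\<forall>i. 0 \<le> z $ i" and z_left: "z v* Q = 0" and z_sum: "ones \<bullet> z = 1"
    and "0 < k"
  shows "((\<lambda>t. mat_exp (t *\<^sub>R (k *\<^sub>R Q))) \<longlongrightarrow> ones_outer z) at_top"
proof (rule rate_matrix_exp_tendsto[OF _ _ _ _ z_nonneg z_sum])
  show "\<forall>i j. i \<noteq> j \<longrightarrow> 0 \<le> (k *\<^sub>R Q) $ i $ j"
    using \<open>0 < k\<close> by (simp add: Q_def laplacian_offdiag)
  have "(src e, dst e) \<in> {(j, i). 0 < (k *\<^sub>R Q) $ i $ j}" for e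
  proof -
    have "{e'. src e' = src e \<and> dst e' = dst e} \<noteq> {}" and "dst e \<noteq> src e"
      using no_loops by (auto simp: eq_commute[of "dst e"])
    then show ?thesis
      using \<open>0 < k\<close> by (simp add: Q_def laplacian_offdiag card_gt_0_iff)
  qed
  then have "edge_rel src dst \<subseteq> {(j, i). 0 < (k *\<^sub>R Q) $ i $ j}"
    by (auto simp: edge_rel_def)
  then show "\<forall>i j. (j, i) \<in> {(j, i). 0 < (k *\<^sub>R Q) $ i $ j}\<^sup>*"
    using conn rtrancl_mono unfolding strongly_connected_def by blast
  have "Q *v ones = 0"
    unfolding Q_def
    by (simp only: transpose_incidence_ones matrix_vector_mult_0_right flip: matrix_vector_mul_assoc)
  then show "(k *\<^sub>R Q) *v ones = 0"
    by (simp flip: scaleR_matrix_vector_assoc)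
  show "z v* (k *\<^sub>R Q) = 0"
    using z_left by (simp add: vector_scaleR_matrix_ac)
qed

lemma proj_off_mult_vector: "proj_off i0 *v y = y - (y $ i0) *\<^sub>R axis i0 (1::real)"
proof -
  have "(proj_off i0 *v y) $ i = (if i = i0 then 0 else y $ i)" for i
    by (simp add: proj_off_def matrix_vector_mult_def if_distrib[of "\<lambda>c. c * _"] sum.If_cases
        cong: if_cong)
  then show ?thesis
    by (simp add: vec_eq_iff axis_def)
qed

lemma conjugate_proj_off:
  fixes T :: "real^'n::finite^'n"
  assumes T: "invertible T" and T_col: "\<forall>i. T $ i $ i0 = 1" and Tinv_row: "matrix_inv T $ i0 = z"
  shows "T ** proj_off i0 ** matrix_inv T = mat 1 - ones_outer z"
proof -
  have "T *v axis i0 1 = ones"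
    using T_col by (simp add: vec_eq_iff matrix_vector_mult_axis ones_def)
  moreover have "(matrix_inv T *v x) $ i0 = z \<bullet> x" for x
    using Tinv_row by (simp add: matrix_vector_mul_component)
  moreover have "T *v (matrix_inv T *v x) = x" for x
    by (simp add: matrix_vector_mul_assoc matrix_inv_inverse[OF T])
  ultimately have "T *v (proj_off i0 *v (matrix_inv T *v x)) = x - (z \<bullet> x) *\<^sub>R ones" for x
    by (simp add: proj_off_mult_vector matrix_vector_mult_diff_distrib matrix_vector_mult_scaleR)
  then show ?thesis
    by (simp add: matrix_eq matrix_vector_mult_diff_rdistrib ones_outer_mult_vector
        flip: matrix_vector_mul_assoc)
qed

lemma pseudo_inverse_identities:
  fixes T L Linv :: "real^'n::finite^'n"
  assumes T: "invertible T" and T_col: "\<forall>i. T $ i $ i0 = 1" and Tinv_row: "matrix_inv T $ i0 = z"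
    and Linv_blk: "zero_first_block i0 Linv"
    and L_Linv: "L ** Linv = proj_off i0" and Linv_L: "Linv ** L = proj_off i0"
  shows "(T ** Linv ** matrix_inv T) ** (T ** L ** matrix_inv T) = mat 1 - ones_outer z"
    and "(T ** L ** matrix_inv T) ** (T ** Linv ** matrix_inv T) = mat 1 - ones_outer z"
    and "(T ** Linv ** matrix_inv T) ** ones_outer z = 0"
proof -
  have "matrix_inv T *v (T *v y) = y" for y
    by (simp add: matrix_vector_mul_assoc matrix_inv_inverse[OF T])
  then have cancel: "(T ** M ** matrix_inv T) ** (T ** M' ** matrix_inv T) = T ** (M ** M') ** matrix_inv T"
    for M M' :: "real^'n^'n"
    by (simp add: matrix_eq flip: matrix_vector_mul_assoc)
  show "(T ** Linv ** matrix_inv T) ** (T ** L ** matrix_inv T) = mat 1 - ones_outer z"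
       "(T ** L ** matrix_inv T) ** (T ** Linv ** matrix_inv T) = mat 1 - ones_outer z"
    by (simp_all only: cancel Linv_L L_Linv conjugate_proj_off[OF T T_col Tinv_row])
  have "matrix_inv T *v ones = axis i0 1"
    using T_col by (metis (no_types) matrix_inv_inverse(2)[OF T] matrix_vector_mul_assoc matrix_vector_mul_lid
        vec_eq_iff matrix_vector_mult_axis ones_def vec_lambda_beta)
  moreover have "Linv *v axis i0 1 = 0"
    using Linv_blk by (simp add: zero_first_block_def vec_eq_iff matrix_vector_mult_axis)
  ultimately show "(T ** Linv ** matrix_inv T) ** ones_outer z = 0"
    by (simp add: matrix_eq ones_outer_mult_vector matrix_vector_mult_scaleR flip: matrix_vector_mul_assoc)
qed

theorem proposition2:
  fixes src dst :: "'m::finite \<Rightarrow> 'n::finite"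
    and z :: "real^'n" and T L Linv :: "real^'n^'n" and i0 :: 'n
    and omega_u :: "real^'n" and k :: real
    and theta :: "real \<Rightarrow> real^'n"
  defines "W \<equiv> ones_outer z"
    and "Qdd \<equiv> T ** Linv ** matrix_inv T"
    and "c \<equiv> (\<lambda>t. k *\<^sub>R (dst_mat dst *v (transpose (incidence_mat src dst) *v theta t)))"
  assumes graph_inj: "inj (\<lambda>e. (src e, dst e))"
    and no_loops: "\<forall>e. src e \<noteq> dst e"
    and conn: "strongly_connected src dst"
    and z_pos: "\<forall>i. z $ i > 0"
    and z_left: "z v* (dst_mat dst ** transpose (incidence_mat src dst)) = 0"
    and z_norm: "ones \<bullet> z = 1"
    and T_inv: "invertible T"
    and T_col: "\<forall>i. T $ i $ i0 = 1"
    and Tinv_row: "matrix_inv T $ i0 = z"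
    and L_blk: "zero_first_block i0 L"
    and Linv_blk: "zero_first_block i0 Linv"
    and L_Linv: "L ** Linv = proj_off i0"
    and Linv_L: "Linv ** L = proj_off i0"
    and Q_decomp: "(dst_mat dst ** transpose (incidence_mat src dst)) = T ** L ** matrix_inv T"
    and k_pos: "k > 0"
    and ode: "\<forall>t\<ge>0. (theta has_vector_derivative (omega_u + c t)) (at t within {0..})"
  shows "(\<forall>t\<ge>0. theta t =
            (t *\<^sub>R W + (1 / k) *\<^sub>R (Qdd ** (mat_exp ((k * t) *\<^sub>R (dst_mat dst ** transpose (incidence_mat src dst))) - mat 1))) *v omega_u
            + mat_exp ((k * t) *\<^sub>R (dst_mat dst ** transpose (incidence_mat src dst))) *v theta 0)
       \<and> ((\<lambda>t. omega_u + c t) \<longlongrightarrow> W *v omega_u) at_top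
       \<and> ((\<lambda>t. transpose (incidence_mat src dst) *v theta t) \<longlongrightarrow> - ((1 / k) *\<^sub>R (transpose (incidence_mat src dst) *v (Qdd *v omega_u)))) at_top"
proof -
  let ?B = "transpose (incidence_mat src dst)"
  define A where "A = k *\<^sub>R (dst_mat dst ** ?B)"
  define G where "G = (1 / k) *\<^sub>R Qdd"
  have G_A: "G ** A = mat 1 - W" and A_G: "A ** G = mat 1 - W" and G_W: "G ** W = 0"
    using pseudo_inverse_identities[OF T_inv T_col Tinv_row Linv_blk L_Linv Linv_L] k_pos
    unfolding A_def G_def Q_decomp Qdd_def W_def
    by (simp_all add: matrix_scalar_ac flip: scalar_matrix_assoc)
  have B_W: "?B ** W = 0" and A_W: "A ** W = 0"
    by (simp_all add: W_def A_def transpose_incidence_ones_outer flip: matrix_mul_assoc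
        scalar_matrix_assoc)
  have c_eq: "c t = A *v theta t" for t
    by (simp add: c_def A_def del: transpose_matrix_vector
        flip: matrix_vector_mul_assoc scaleR_matrix_vector_assoc)
  have solution: "\<forall>t\<ge>0. theta t =
      (t *\<^sub>R W + G ** (mat_exp (t *\<^sub>R A) - mat 1)) *v omega_u + mat_exp (t *\<^sub>R A) *v theta 0"
    using ode by (auto simp: c_eq intro!: forced_linear_ode_solution[OF G_A A_G A_W])
  have "((\<lambda>t. mat_exp (t *\<^sub>R A)) \<longlongrightarrow> W) at_top"
    using laplacian_exp_tendsto[OF conn no_loops _ z_left z_norm k_pos] z_pos
    by (simp add: A_def W_def less_imp_le)
  note limits = forced_linear_ode_limits[OF solution this G_W A_W A_G B_W]
  have flow_limit_value: "- (?B *v (G *v omega_u)) = - ((1 / k) *\<^sub>R (?B *v (Qdd *v omega_u)))"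
    by (simp add: G_def matrix_vector_mult_scaleR del: transpose_matrix_vector
        flip: scaleR_matrix_vector_assoc)
  have exp_arg: "(k * t) *\<^sub>R (dst_mat dst ** ?B) = t *\<^sub>R A"
    and Qdd_mult: "(1 / k) *\<^sub>R (Qdd ** M) = G ** M" for t M
    by (simp_all add: A_def G_def scalar_matrix_assoc mult.commute)
  show ?thesis
    unfolding c_eq exp_arg Qdd_mult flow_limit_value[symmetric] using solution limits by blast
qed

end
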